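(* Let ${\mathsf K},{\mathsf N}$ be positive integers, ${\mathsf q}$ a prime power, and $t\in\{0,1,\ldots,{\mathsf K}\}$. For every file length ${\mathsf B}$ that is a multiple of $\binom{{\mathsf K}}{t}$, there exists an uncoded cache placement in which each user stores ${\mathsf M}{\mathsf B}$ symbols with ${\mathsf M}=\frac{{\mathsf N}t}{{\mathsf K}}$, together with, for every demand matrix $\mathbb{D}\in\mathbb{F}_{\mathsf q}^{{\mathsf K}\times{\mathsf N}}$, a delivery (encoding and decoding functions) under which every user $k$ correctly decodes its demanded function and the load is $$\mathsf R(\mathbb{D})=\frac{\binom{{\mathsf K}}{t+1}-\binom{{\mathsf K}-\mathrm{rank}_{\mathsf q}(\mathbb{D})}{t+1}}{\binom{{\mathsf K}}{t}}.$$ In particular the worst-case load of this scheme equals $\frac{\binom{{\mathsf K}}{t+1}-\binom{{\mathsf K}-\min\{{\mathsf K},{\mathsf N}\}}{t+1}}{\binom{{\mathsf K}}{t}}$, attained by demand matrices of rank $\min\{{\mathsf K},{\mathsf N}\}$.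
   Context: Shared-link cache-aided scalar linear function retrieval problem with parameters $({\mathsf K},{\mathsf N},{\mathsf M},{\mathsf q})$: a server holds ${\mathsf N}$ files $F_1,\ldots,F_{\mathsf N}$, each a vector of ${\mathsf B}$ independent uniformly distributed symbols of $\mathbb{F}_{\mathsf q}$, and is connected to ${\mathsf K}$ users by an error-free broadcast link. Placement phase: user $k$ stores $Z_k=\phi_k(F_1,\ldots,F_{\mathsf N})\in\mathbb{F}_{\mathsf q}^{{\mathsf B}{\mathsf M}}$, chosen without knowledge of demands. Delivery phase: user $k$ demands the row vector $\mathbf y_k=(y_{k,1},\ldots,y_{k,{\mathsf N}})\in\mathbb{F}_{\mathsf q}^{\mathsf N}$, i.e. wants $y_{k,1}F_1+\cdots+y_{k,{\mathsf N}}F_{\mathsf N}$; the demand matrix is $\mathbb{D}=[\mathbf y_1;\ldots;\mathbf y_{\mathsf K}]\in\mathbb{F}_{\mathsf q}^{{\mathsf K}\times{\mathsf N}}$. The server broadcasts $X=\psi(\mathbb{D},F_1,\ldots,F_{\mathsf N})\in\mathbb{F}_{\mathsf q}^{{\mathsf B}{\mathsf R}}$, and each user $k$ must compute $y_{k,1}F_1+\cdots+y_{k,{\mathsf N}}F_{\mathsf N}=\xi_k(\mathbb{D},Z_k,X)$ for all file realizations. ${\mathsf R}$ is the load (transmitted symbols divided by ${\mathsf B}$). A placement is uncoded if each $Z_k$ consists of a subset of the symbols of the files, copied directly. The worst-case load of a scheme is the maximum load over all demand matrices. $\binom{x}{y}=0$ if $x<y$ or $x<0$ or $y<0$. $\mathrm{rank}_{\mathsf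 q}$ denotes rank over $\mathbb{F}_{\mathsf q}$. *)

theory Defs
  imports Complex_Main "Jordan_Normal_Form.DL_Rank"
begin

text \<open>Files: F i j is symbol j (j < B) of file i (i < N).  Only entries with
  i < N and j < B are meaningful; the truncation below makes this explicit.\<close>

definition trunc_files :: "nat \<Rightarrow> nat \<Rightarrow> (nat \<Rightarrow> nat \<Rightarrow> 'a::zero) \<Rightarrow> nat \<Rightarrow> nat \<Rightarrow> 'a" where
  "trunc_files N B F = (\<lambda>i j. if i < N \<and> j < B then F i j else 0)"

definition uncoded_cache :: "(nat \<times> nat) set \<Rightarrow> (nat \<Rightarrow> nat \<Rightarrow> 'a::zero) \<Rightarrow> nat \<times> nat \<Rightarrow> 'a" where
  "uncoded_cache S F = (\<lambda>p. if p \<in> S then F (fst p) (snd p) else 0)"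

definition transmit :: "nat \<Rightarrow> (nat \<Rightarrow> 'a::zero) \<Rightarrow> nat \<Rightarrow> 'a" where
  "transmit L X = (\<lambda>l. if l < L then X l else 0)"

definition demanded :: "nat \<Rightarrow> 'a::field mat \<Rightarrow> nat \<Rightarrow> (nat \<Rightarrow> nat \<Rightarrow> 'a) \<Rightarrow> nat \<Rightarrow> 'a" where
  "demanded N D k F j = (\<Sum>i<N. D $$ (k, i) * F i j)"

text \<open>Rank over the field 'a (column rank, which equals row rank).\<close>
abbreviation rank_q :: "'a::field mat \<Rightarrow> nat" where
  "rank_q D \<equiv> vec_space.rank (dim_row D) D"

end

theory Submission
  imports Defs
begin

text \<open>Split every file into one subfile per t-subset T of the users, cached exactly by the users
  in T. For a (t+1)-subset S the signed sum W_S of the demands of the users k in S, each restricted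
  to the subfile S - {k}, lets every k in S recover its missing subfile, the other terms being
  cached. Pick a set L of at most rank(D) rows of D spanning all rows. The server sends only the
  W_S with S meeting L, i.e. C(K,t+1) - C(K-|L|,t+1) messages of B/C(K,t) symbols each. Every
  other W_S is a linear combination of the sent ones: for any matrix V whose rows lie in the left
  kernel of D, the sum over S of det(V_S) W_S vanishes (Laplace expansion), and the rows
  e_k - (sum over l in L of alpha_kl e_l), k in S, give det(V_S) = 1 and det(V_S') = 0 for every
  other S' avoiding L.\<close>

lemma insort_eq_take_drop:
  fixes x :: "'b::linorder"
  assumes "sorted xs"
  shows "insort x xs = take (length (filter (\<lambda>y. y < x) xs)) xs @ x # drop (length (filter (\<lambda>y. y < x) xs)) xs"
  using assms
proof (induction xs)
  case (Cons a xs)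
  show ?case
  proof (cases "x \<le> a")
    case True
    then have "filter (\<lambda>y. y < x) (a # xs) = []"
      using Cons.prems by (force simp: filter_empty_conv)
    then show ?thesis using True by simp
  next
    case False
    then show ?thesis using Cons by (auto simp: not_le dest: leD)
  qed
qed simp

lemma sorted_list_of_set_insert_nth:
  fixes T :: "nat set"
  assumes fin: "finite T" and kT: "k \<notin> T"
  defines "p \<equiv> card {m\<in>T. m < k}"
  shows "p \<le> card T"
    and "sorted_list_of_set (insert k T) ! p = k"
    and "b < card T \<Longrightarrow> sorted_list_of_set (insert k T) ! (if b < p then b else Suc b) = sorted_list_of_set T ! b"
proof -
  define xs where "xs = sorted_list_of_set T"
  have "{x. x < k} \<inter> set xs = {m\<in>T. m < k}" using fin by (auto simp: xs_def)
  then have lf: "length (filter (\<lambda>y. y < k) xs) = p"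
    unfolding p_def xs_def by (simp add: distinct_length_filter)
  have "sorted_list_of_set (insert k T) = insort k xs"
    using fin kT by (simp add: xs_def)
  also have "\<dots> = take p xs @ k # drop p xs"
    using insort_eq_take_drop[of xs k] unfolding lf by (simp add: xs_def)
  finally have eq: "sorted_list_of_set (insert k T) = take p xs @ k # drop p xs" .
  have len: "length xs = card T" using fin by (simp add: xs_def)
  show p: "p \<le> card T" unfolding p_def using fin by (intro card_mono) auto
  show "sorted_list_of_set (insert k T) ! p = k" unfolding eq using p len by (simp add: nth_append)
  have lt: "length (take p xs) = p" using p len by simp
  show "b < card T \<Longrightarrow> sorted_list_of_set (insert k T) ! (if b < p then b else Suc b) = sorted_list_of_set T ! b"
    unfolding eq xs_def[symmetric] using len by (cases "b < p") (simp_all add: nth_append lt Suc_diff_le)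
qed

definition fin_enum :: "'b set \<Rightarrow> nat \<Rightarrow> 'b" where
  "fin_enum A = (SOME f. bij_betw f {..<card A} A)"

definition fin_index :: "'b set \<Rightarrow> 'b \<Rightarrow> nat" where
  "fin_index A = the_inv_into {..<card A} (fin_enum A)"

lemma bij_betw_fin_enum:
  assumes "finite A" shows "bij_betw (fin_enum A) {..<card A} A"
proof -
  obtain f where "bij_betw f {..<card A} A"
    using finite_same_card_bij[of "{..<card A}" A] assms by auto
  then show ?thesis unfolding fin_enum_def using someI[of "\<lambda>f. bij_betw f {..<card A} A"] by blast
qed

lemma fin_enum_in: "finite A \<Longrightarrow> i < card A \<Longrightarrow> fin_enum A i \<in> A"
  by (rule bij_betw_apply[OF bij_betw_fin_enum]) simp_all

lemma fin_index_less: "finite A \<Longrightarrow> x \<in> A \<Longrightarrow> fin_index A x < card A"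
  unfolding fin_index_def using bij_betw_apply[OF bij_betw_the_inv_into[OF bij_betw_fin_enum]] by simp

lemma fin_enum_index: "finite A \<Longrightarrow> x \<in> A \<Longrightarrow> fin_enum A (fin_index A x) = x"
  unfolding fin_index_def by (rule f_the_inv_into_f_bij_betw[OF bij_betw_fin_enum])

lemma fin_index_enum: "finite A \<Longrightarrow> i < card A \<Longrightarrow> fin_index A (fin_enum A i) = i"
  unfolding fin_index_def by (rule the_inv_into_f_f[OF bij_betw_imp_inj_on[OF bij_betw_fin_enum]]) simp_all

lemma block_less:
  fixes b p B' :: nat
  assumes "b < C" and "p < B'"
  shows "b * B' + p < C * B'"
proof -
  have "b * B' + p < Suc b * B'" using assms(2) by simp
  also have "\<dots> \<le> C * B'" using assms(1) by (intro mult_right_mono) simp_all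
  finally show ?thesis .
qed

section \<open>Subsets of users\<close>

definition ksubsets :: "nat \<Rightarrow> nat \<Rightarrow> nat set set" where
  "ksubsets K n = {S. S \<subseteq> {..<K} \<and> card S = n}"

lemma finite_ksubsets [simp]: "finite (ksubsets K n)"
  unfolding ksubsets_def by (rule finite_subset[of _ "Pow {..<K}"]) auto

lemma ksubsets_finite: "S \<in> ksubsets K n \<Longrightarrow> finite S"
  unfolding ksubsets_def using finite_subset[OF _ finite_lessThan] by blast

lemma card_ksubsets [simp]: "card (ksubsets K n) = K choose n"
  unfolding ksubsets_def using n_subsets[of "{..<K}" n] by simp

lemma ksubsets_Diff_singleton:
  assumes "S \<in> ksubsets K (Suc t)" and "k \<in> S" shows "S - {k} \<in> ksubsets K t"
  using assms ksubsets_finite[OF assms(1)] unfolding ksubsets_def by auto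

lemma ksubsets_insert:
  assumes "T \<in> ksubsets K t" and "k < K" and "k \<notin> T" shows "insert k T \<in> ksubsets K (Suc t)"
  using assms ksubsets_finite[OF assms(1)] unfolding ksubsets_def by auto

lemma card_ksubsets_disjoint:
  assumes "L \<subseteq> {..<K}"
  shows "card {S\<in>ksubsets K n. S \<inter> L = {}} = (K - card L) choose n"
proof -
  have "{S\<in>ksubsets K n. S \<inter> L = {}} = {S. S \<subseteq> {..<K} - L \<and> card S = n}"
    unfolding ksubsets_def by auto
  moreover have "card ({..<K} - L) = K - card L"
    using assms by (simp add: card_Diff_subset finite_subset)
  ultimately show ?thesis using n_subsets[of "{..<K} - L" n] by simp
qed

definition ksubsets_meeting :: "nat \<Rightarrow> nat \<Rightarrow> nat set \<Rightarrow> nat set set" where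
  "ksubsets_meeting K n L = {S\<in>ksubsets K n. S \<inter> L \<noteq> {}}"

lemma finite_ksubsets_meeting [simp]: "finite (ksubsets_meeting K n L)"
  unfolding ksubsets_meeting_def by simp

lemma card_ksubsets_meeting:
  assumes "L \<subseteq> {..<K}"
  shows "card (ksubsets_meeting K n L) = (K choose n) - ((K - card L) choose n)"
proof -
  have "ksubsets_meeting K n L = ksubsets K n - {S\<in>ksubsets K n. S \<inter> L = {}}"
    unfolding ksubsets_meeting_def by auto
  then show ?thesis by (simp add: card_Diff_subset card_ksubsets_disjoint[OF assms])
qed

lemma card_ksubsets_containing:
  assumes "k < K"
  shows "card {T\<in>ksubsets K t. k \<in> T} * K = t * (K choose t)"
proof -
  have "{T\<in>ksubsets K t. k \<in> T} = ksubsets_meeting K t {k}"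
    unfolding ksubsets_meeting_def by auto
  then have card: "card {T\<in>ksubsets K t. k \<in> T} = (K choose t) - ((K - 1) choose t)"
    using card_ksubsets_meeting[of "{k}" K t] assms by simp
  show ?thesis
  proof (cases "t = 0")
    case False
    then obtain s where s: "t = Suc s" using not0_implies_Suc by blast
    have "K choose t = ((K - 1) choose s) + ((K - 1) choose t)"
      using assms s choose_reduce_nat[of K t] by simp
    moreover have "t * (K choose t) = K * ((K - 1) choose s)"
      using times_binomial_minus1_eq[of t K] s by simp
    ultimately show ?thesis unfolding card by simp
  qed (unfold card, simp)
qed

lemma sum_ksubsets_Suc:
  "(\<Sum>S\<in>ksubsets K (Suc t). \<Sum>k\<in>S. f S k) = (\<Sum>T\<in>ksubsets K t. \<Sum>k\<in>{..<K} - T. f (insert k T) k)"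
proof -
  have "(\<Sum>S\<in>ksubsets K (Suc t). \<Sum>k\<in>S. f S k) = (\<Sum>(S,k)\<in>Sigma (ksubsets K (Suc t)) (\<lambda>S. S). f S k)"
    by (rule sum.Sigma) (auto intro: ksubsets_finite)
  also have "\<dots> = (\<Sum>(T,k)\<in>Sigma (ksubsets K t) (\<lambda>T. {..<K} - T). f (insert k T) k)"
  proof (rule sum.reindex_bij_witness[of _ "\<lambda>(T,k). (insert k T, k)" "\<lambda>(S,k). (S - {k}, k)"])
    fix a assume "a \<in> Sigma (ksubsets K (Suc t)) (\<lambda>S. S)"
    then obtain S k where a: "a = (S,k)" "S \<in> ksubsets K (Suc t)" "k \<in> S" by auto
    then have "S - {k} \<in> ksubsets K t" "k < K" by (auto simp: ksubsets_Diff_singleton ksubsets_def)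
    then show "(\<lambda>(S,k). (S - {k}, k)) a \<in> Sigma (ksubsets K t) (\<lambda>T. {..<K} - T)"
      using a by simp
    show "(\<lambda>(T,k). (insert k T, k)) ((\<lambda>(S,k). (S - {k}, k)) a) = a"
      and "(\<lambda>(T,k). f (insert k T) k) ((\<lambda>(S,k). (S - {k}, k)) a) = (\<lambda>(S,k). f S k) a"
      using a by (simp_all add: insert_absorb)
  next
    fix b assume "b \<in> Sigma (ksubsets K t) (\<lambda>T. {..<K} - T)"
    then obtain T k where b: "b = (T,k)" "T \<in> ksubsets K t" "k < K" "k \<notin> T" by auto
    then show "(\<lambda>(T,k). (insert k T, k)) b \<in> Sigma (ksubsets K (Suc t)) (\<lambda>S. S)"
      and "(\<lambda>(S,k). (S - {k}, k)) ((\<lambda>(T,k). (insert k T, k)) b) = b"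
      by (simp_all add: ksubsets_insert)
  qed
  also have "\<dots> = (\<Sum>T\<in>ksubsets K t. \<Sum>k\<in>{..<K} - T. f (insert k T) k)"
    by (rule sum.Sigma[symmetric]) auto
  finally show ?thesis .
qed

section \<open>Coded messages and a determinant identity\<close>

definition pos_sign :: "nat \<Rightarrow> nat set \<Rightarrow> 'a::comm_ring_1" where
  "pos_sign k S = (-1) ^ card {m\<in>S. m < k}"

lemma pos_sign_square: "pos_sign k S * pos_sign k S = (1::'a::comm_ring_1)"
  unfolding pos_sign_def by (simp flip: power_mult_distrib)

text \<open>G i T stands for the subfile of file i cached exactly by the users in T.\<close>
definition coded_msg :: "'a::comm_ring_1 mat \<Rightarrow> nat \<Rightarrow> (nat \<Rightarrow> nat set \<Rightarrow> 'a) \<Rightarrow> nat set \<Rightarrow> 'a" where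
  "coded_msg D N G S = (\<Sum>k\<in>S. pos_sign k S * (\<Sum>i<N. D $$ (k,i) * G i (S - {k})))"

lemma coded_msg_cong:
  assumes "\<And>i k. i < N \<Longrightarrow> k \<in> S \<Longrightarrow> G i (S - {k}) = G' i (S - {k})"
  shows "coded_msg D N G S = coded_msg D N G' S"
  unfolding coded_msg_def using assms by (intro sum.cong refl) auto

definition minor_cols :: "(nat \<Rightarrow> nat \<Rightarrow> 'a::comm_ring_1) \<Rightarrow> nat \<Rightarrow> nat set \<Rightarrow> 'a" where
  "minor_cols v n S = det (mat n n (\<lambda>(a,b). v a (sorted_list_of_set S ! b)))"

definition del_row :: "nat \<Rightarrow> (nat \<Rightarrow> 'b) \<Rightarrow> nat \<Rightarrow> 'b" where
  "del_row a v a' = v (if a' < a then a' else Suc a')"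

definition minor_cols_cons :: "(nat \<Rightarrow> nat \<Rightarrow> 'a::comm_ring_1) \<Rightarrow> nat \<Rightarrow> nat \<Rightarrow> nat set \<Rightarrow> 'a" where
  "minor_cols_cons v n k T =
     det (mat (Suc n) (Suc n) (\<lambda>(a,b). v a (if b = 0 then k else sorted_list_of_set T ! (b - 1))))"

lemma minor_cols_cons_expand:
  "minor_cols_cons v n k T = (\<Sum>a<Suc n. v a k * (-1)^a * minor_cols (del_row a v) n T)"
proof -
  define M where "M = mat (Suc n) (Suc n) (\<lambda>(a,b). v a (if b = 0 then k else sorted_list_of_set T ! (b - 1)))"
  have M: "M \<in> carrier_mat (Suc n) (Suc n)" unfolding M_def by simp
  have del: "mat_delete M a 0 = mat n n (\<lambda>(a',b). del_row a v a' (sorted_list_of_set T ! b))" for a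
    unfolding mat_delete_def M_def del_row_def by (rule eq_matI) auto
  have "det M = (\<Sum>a<Suc n. M $$ (a,0) * cofactor M a 0)"
    by (rule laplace_expansion_column[OF M]) simp
  also have "\<dots> = (\<Sum>a<Suc n. v a k * (-1)^a * minor_cols (del_row a v) n T)"
    by (intro sum.cong refl) (simp only: cofactor_def del, simp add: minor_cols_def M_def mult.assoc)
  finally show ?thesis unfolding minor_cols_cons_def M_def .
qed

lemma minor_cols_cons_mem:
  assumes "finite T" and "k \<in> T" and "card T = n"
  shows "minor_cols_cons v n k T = 0"
proof -
  define M where "M = mat (Suc n) (Suc n) (\<lambda>(a,b). v a (if b = 0 then k else sorted_list_of_set T ! (b - 1)))"
  obtain q where q: "q < n" "sorted_list_of_set T ! q = k"
    using assms by (metis in_set_conv_nth length_sorted_list_of_set set_sorted_list_of_set)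
  have "col M 0 = col M (Suc q)" unfolding M_def using q by (auto simp: col_def)
  then have "det M = 0" by (intro det_identical_columns[of M "Suc n" 0 "Suc q"]) (use q in \<open>auto simp: M_def\<close>)
  then show ?thesis unfolding minor_cols_cons_def M_def .
qed

text \<open>Moving column k from its sorted position p to the front costs the sign (-1)^p.\<close>
lemma pos_sign_minor_cols_insert:
  fixes v :: "nat \<Rightarrow> nat \<Rightarrow> 'a::comm_ring_1"
  assumes fin: "finite T" and kT: "k \<notin> T" and card: "card T = n"
  shows "pos_sign k (insert k T) * minor_cols v (Suc n) (insert k T) = minor_cols_cons v n k T"
proof -
  define p where "p = card {m\<in>T. m < k}"
  note nth = sorted_list_of_set_insert_nth[OF fin kT, folded p_def, unfolded card]
  define M where "M = mat (Suc n) (Suc n) (\<lambda>(a,b). v a (sorted_list_of_set (insert k T) ! b))"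
  have M: "M \<in> carrier_mat (Suc n) (Suc n)" unfolding M_def by simp
  have p: "p < Suc n" using nth(1) by simp
  have sign: "pos_sign k (insert k T) = ((-1)^p :: 'a)"
    unfolding pos_sign_def p_def using kT by (auto intro!: arg_cong[where f = "\<lambda>S. (-1)^card S"])
  have del: "mat_delete M a p = mat n n (\<lambda>(a',b). del_row a v a' (sorted_list_of_set T ! b))" for a
    unfolding mat_delete_def M_def del_row_def by (rule eq_matI) (auto simp: nth(3))
  have "det M = (\<Sum>a<Suc n. M $$ (a,p) * cofactor M a p)"
    by (rule laplace_expansion_column[OF M p])
  also have "\<dots> = (\<Sum>a<Suc n. v a k * ((-1)^(a+p) * minor_cols (del_row a v) n T))"
    by (intro sum.cong refl) (simp only: cofactor_def del, simp add: M_def p nth(2) minor_cols_def)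
  finally have "(-1)^p * det M = (\<Sum>a<Suc n. v a k * ((-1)^p * (-1)^(a+p)) * minor_cols (del_row a v) n T)"
    by (simp add: sum_distrib_left mult_ac del: sum.lessThan_Suc)
  also have "\<dots> = (\<Sum>a<Suc n. v a k * (-1)^a * minor_cols (del_row a v) n T)"
  proof -
    have "(-1::'a)^p * (-1)^(a+p) = (-1)^a" for a
      by (cases "even p") (simp_all add: power_add)
    then show ?thesis by simp
  qed
  also have "\<dots> = minor_cols_cons v n k T"
    by (rule minor_cols_cons_expand[symmetric])
  finally show ?thesis unfolding sign minor_cols_def M_def .
qed

lemma sum_minor_cols_cons_eq_0:
  fixes v :: "nat \<Rightarrow> nat \<Rightarrow> 'a::comm_ring_1" and D :: "'a mat"
  assumes ker: "\<And>a i. a < Suc n \<Longrightarrow> i < N \<Longrightarrow> (\<Sum>k<K. v a k * D $$ (k,i)) = 0"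
  shows "(\<Sum>k<K. minor_cols_cons v n k T * (\<Sum>i<N. D $$ (k,i) * G i T)) = 0"
proof -
  define c where "c a i = (-1)^a * minor_cols (del_row a v) n T * G i T" for a i
  have "(\<Sum>k<K. minor_cols_cons v n k T * (\<Sum>i<N. D $$ (k,i) * G i T))
      = (\<Sum>k<K. \<Sum>a<Suc n. \<Sum>i<N. v a k * D $$ (k,i) * c a i)"
    unfolding minor_cols_cons_expand c_def
    by (simp add: sum_distrib_left sum_distrib_right mult_ac del: sum.lessThan_Suc)
  also have "\<dots> = (\<Sum>a<Suc n. \<Sum>i<N. (\<Sum>k<K. v a k * D $$ (k,i)) * c a i)"
    by (subst sum.swap, rule sum.cong[OF refl], subst sum.swap) (simp add: sum_distrib_right)
  also have "\<dots> = 0" by (simp add: ker)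
  finally show ?thesis .
qed

lemma sum_minor_cols_coded_msg_eq_0:
  fixes v :: "nat \<Rightarrow> nat \<Rightarrow> 'a::comm_ring_1" and D :: "'a mat"
  assumes ker: "\<And>a i. a < Suc n \<Longrightarrow> i < N \<Longrightarrow> (\<Sum>k<K. v a k * D $$ (k,i)) = 0"
  shows "(\<Sum>S\<in>ksubsets K (Suc n). minor_cols v (Suc n) S * coded_msg D N G S) = 0"
proof -
  define g where "g k T = (\<Sum>i<N. D $$ (k,i) * G i T)" for k T
  have "(\<Sum>S\<in>ksubsets K (Suc n). minor_cols v (Suc n) S * coded_msg D N G S)
      = (\<Sum>S\<in>ksubsets K (Suc n). \<Sum>k\<in>S. pos_sign k S * minor_cols v (Suc n) S * g k (S - {k}))"
    unfolding coded_msg_def g_def by (simp add: sum_distrib_left mult_ac)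
  also have "\<dots> = (\<Sum>T\<in>ksubsets K n. \<Sum>k\<in>{..<K} - T. minor_cols_cons v n k T * g k T)"
    unfolding sum_ksubsets_Suc
  proof (intro sum.cong refl)
    fix T k assume T: "T \<in> ksubsets K n" and k: "k \<in> {..<K} - T"
    have "finite T" "card T = n" using T ksubsets_finite[OF T] by (simp_all add: ksubsets_def)
    then show "pos_sign k (insert k T) * minor_cols v (Suc n) (insert k T) * g k (insert k T - {k})
        = minor_cols_cons v n k T * g k T"
      using pos_sign_minor_cols_insert[of T k n v] k by simp
  qed
  also have "\<dots> = (\<Sum>T\<in>ksubsets K n. \<Sum>k<K. minor_cols_cons v n k T * g k T)"
  proof (rule sum.cong[OF refl])
    fix T assume T: "T \<in> ksubsets K n"
    have "finite T" "card T = n" using T ksubsets_finite[OF T] by (simp_all add: ksubsets_def)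
    then show "(\<Sum>k\<in>{..<K} - T. minor_cols_cons v n k T * g k T) = (\<Sum>k<K. minor_cols_cons v n k T * g k T)"
      by (intro sum.mono_neutral_left) (auto simp: minor_cols_cons_mem)
  qed
  also have "\<dots> = 0"
    unfolding g_def by (rule sum.neutral, rule ballI, rule sum_minor_cols_cons_eq_0[OF ker])
  finally show ?thesis .
qed

definition spanning_rows :: "nat \<Rightarrow> nat \<Rightarrow> 'a::comm_ring_1 mat \<Rightarrow> nat set \<Rightarrow> (nat \<Rightarrow> nat \<Rightarrow> 'a) \<Rightarrow> bool" where
  "spanning_rows K N D L \<alpha> \<longleftrightarrow> L \<subseteq> {..<K} \<and>
     (\<forall>k<K. k \<notin> L \<longrightarrow> (\<forall>i<N. D $$ (k,i) = (\<Sum>l\<in>L. \<alpha> k l * D $$ (l,i))))"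

text \<open>Row a is e_k - (\<Sum>l\<in>L. \<alpha> k l e_l) for the a-th element k of S, a left kernel vector of D.\<close>
definition recovery_rows :: "nat set \<Rightarrow> (nat \<Rightarrow> nat \<Rightarrow> 'a::comm_ring_1) \<Rightarrow> nat set \<Rightarrow> nat \<Rightarrow> nat \<Rightarrow> 'a" where
  "recovery_rows L \<alpha> S a s =
     (if s = sorted_list_of_set S ! a then 1 else 0) - (if s \<in> L then \<alpha> (sorted_list_of_set S ! a) s else 0)"

lemma recovery_rows_kernel:
  fixes D :: "'a::comm_ring_1 mat"
  assumes rows: "spanning_rows K N D L \<alpha>" and S: "S \<in> ksubsets K n" and dis: "S \<inter> L = {}"
    and a: "a < n" and i: "i < N"
  shows "(\<Sum>k<K. recovery_rows L \<alpha> S a k * D $$ (k,i)) = 0"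
proof -
  define s where "s = sorted_list_of_set S ! a"
  have "length (sorted_list_of_set S) = n" using S ksubsets_finite[OF S] by (simp add: ksubsets_def)
  then have "s \<in> S" using a ksubsets_finite[OF S] unfolding s_def by (metis nth_mem set_sorted_list_of_set)
  then have sK: "s < K" and sL: "s \<notin> L" using S dis by (auto simp: ksubsets_def)
  have LK: "L \<subseteq> {..<K}" using rows by (simp add: spanning_rows_def)
  have "recovery_rows L \<alpha> S a k * D $$ (k,i)
      = (if k = s then D $$ (k,i) else 0) - (if k \<in> L then \<alpha> s k * D $$ (k,i) else 0)" for k
    unfolding recovery_rows_def s_def[symmetric] by (simp add: left_diff_distrib)
  then have "(\<Sum>k<K. recovery_rows L \<alpha> S a k * D $$ (k,i))
      = (\<Sum>k<K. if k = s then D $$ (k,i) else 0) - (\<Sum>k<K. if k \<in> L then \<alpha> s k * D $$ (k,i) else 0)"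
    by (simp add: sum_subtractf)
  also have "\<dots> = D $$ (s,i) - (\<Sum>l\<in>L. \<alpha> s l * D $$ (l,i))"
    using sK LK sum.inter_restrict[of "{..<K}" "\<lambda>l. \<alpha> s l * D $$ (l,i)" L] by (simp add: Int_absorb1)
  also have "\<dots> = 0" using rows sK sL i by (simp add: spanning_rows_def)
  finally show ?thesis .
qed

lemma minor_cols_recovery_rows_self:
  assumes S: "S \<in> ksubsets K n" and dis: "S \<inter> L = {}"
  shows "minor_cols (recovery_rows L \<alpha> S) n S = 1"
proof -
  have fin: "finite S" using ksubsets_finite[OF S] .
  have len: "length (sorted_list_of_set S) = n" using S fin by (simp add: ksubsets_def)
  have notL: "b < n \<Longrightarrow> sorted_list_of_set S ! b \<notin> L" for b
    using len fin dis by (metis disjoint_iff nth_mem set_sorted_list_of_set)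
  have inj: "a < n \<Longrightarrow> b < n \<Longrightarrow> sorted_list_of_set S ! b = sorted_list_of_set S ! a \<longleftrightarrow> b = a" for a b
    using len by (simp add: nth_eq_iff_index_eq)
  have "mat n n (\<lambda>(a,b). recovery_rows L \<alpha> S a (sorted_list_of_set S ! b)) = 1\<^sub>m n"
    by (rule eq_matI) (auto simp: recovery_rows_def notL inj)
  then show ?thesis unfolding minor_cols_def by simp
qed

lemma minor_cols_recovery_rows_other:
  assumes S0: "S0 \<in> ksubsets K n" and S: "S \<in> ksubsets K n" and dis: "S \<inter> L = {}" and ne: "S \<noteq> S0"
  shows "minor_cols (recovery_rows L \<alpha> S0) n S = 0"
proof -
  have fin0: "finite S0" and fin: "finite S" using ksubsets_finite S0 S by blast+
  have "\<not> S \<subseteq> S0"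
  proof
    assume "S \<subseteq> S0"
    then have "S = S0" using card_subset_eq[OF fin0] S S0 by (simp add: ksubsets_def)
    with ne show False ..
  qed
  then obtain s where s: "s \<in> S" "s \<notin> S0" by blast
  have len: "length (sorted_list_of_set S) = n" "length (sorted_list_of_set S0) = n"
    using S S0 fin fin0 by (simp_all add: ksubsets_def)
  obtain b where b: "b < n" "sorted_list_of_set S ! b = s"
    using s(1) fin len by (metis in_set_conv_nth set_sorted_list_of_set)
  have ne_a: "a < n \<Longrightarrow> s \<noteq> sorted_list_of_set S0 ! a" for a
    using len fin0 s(2) by (metis nth_mem set_sorted_list_of_set)
  have sL: "s \<notin> L" using s(1) dis by blast
  define M where "M = mat n n (\<lambda>(a,b). recovery_rows L \<alpha> S0 a (sorted_list_of_set S ! b))"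
  have M: "M \<in> carrier_mat n n" unfolding M_def by simp
  have "det M = (\<Sum>a<n. M $$ (a,b) * cofactor M a b)"
    by (rule laplace_expansion_column[OF M b(1)])
  also have "\<dots> = 0"
    using b ne_a sL by (intro sum.neutral) (simp add: M_def recovery_rows_def)
  finally show ?thesis unfolding minor_cols_def M_def .
qed

lemma coded_msg_eq_sum_meeting:
  fixes D :: "'a::comm_ring_1 mat"
  assumes rows: "spanning_rows K N D L \<alpha>" and S: "S \<in> ksubsets K (Suc t)" and dis: "S \<inter> L = {}"
  shows "coded_msg D N G S =
    - (\<Sum>S'\<in>ksubsets_meeting K (Suc t) L. minor_cols (recovery_rows L \<alpha> S) (Suc t) S' * coded_msg D N G S')"
proof -
  define w where "w S' = minor_cols (recovery_rows L \<alpha> S) (Suc t) S' * coded_msg D N G S'" for S'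
  define A where "A = ksubsets_meeting K (Suc t) L"
  define B where "B = {S'\<in>ksubsets K (Suc t). S' \<inter> L = {}}"
  have fin: "finite A" "finite B" unfolding A_def B_def by simp_all
  have "ksubsets K (Suc t) = A \<union> B" "A \<inter> B = {}"
    unfolding A_def B_def ksubsets_meeting_def by auto
  then have "sum w A + sum w B = sum w (ksubsets K (Suc t))"
    using fin by (simp add: sum.union_disjoint)
  also have "\<dots> = 0"
    unfolding w_def by (rule sum_minor_cols_coded_msg_eq_0) (rule recovery_rows_kernel[OF rows S dis])
  finally have sum0: "sum w A + sum w B = 0" .
  have SB: "S \<in> B" using S dis by (simp add: B_def)
  have "\<forall>S'\<in>B - {S}. w S' = 0"
  proof
    fix S' assume "S' \<in> B - {S}"
    then show "w S' = 0"
      using minor_cols_recovery_rows_other[OF S, of S' L \<alpha>] by (simp add: B_def w_def)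
  qed
  then have "sum w B = w S"
    using sum.remove[OF fin(2) SB, of w] by (simp add: sum.neutral)
  also have "\<dots> = coded_msg D N G S"
    using minor_cols_recovery_rows_self[OF S dis, of \<alpha>] by (simp add: w_def)
  finally show ?thesis
    using sum0 unfolding A_def w_def by (simp add: eq_neg_iff_add_eq_0 add.commute)
qed

definition recover :: "nat \<Rightarrow> nat \<Rightarrow> nat set \<Rightarrow> (nat \<Rightarrow> nat \<Rightarrow> 'a::comm_ring_1) \<Rightarrow> (nat set \<Rightarrow> 'a) \<Rightarrow> nat set \<Rightarrow> 'a" where
  "recover K t L \<alpha> y S =
     (if S \<inter> L \<noteq> {} then y S
      else - (\<Sum>S'\<in>ksubsets_meeting K (Suc t) L. minor_cols (recovery_rows L \<alpha> S) (Suc t) S' * y S'))"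

lemma recover_coded_msg:
  fixes D :: "'a::comm_ring_1 mat"
  assumes rows: "spanning_rows K N D L \<alpha>" and S: "S \<in> ksubsets K (Suc t)"
    and y: "\<And>S'. S' \<in> ksubsets_meeting K (Suc t) L \<Longrightarrow> y S' = coded_msg D N G S'"
  shows "recover K t L \<alpha> y S = coded_msg D N G S"
proof (cases "S \<inter> L = {}")
  case True
  then show ?thesis
    unfolding recover_def coded_msg_eq_sum_meeting[OF rows S True] using y by simp
next
  case False
  then have "S \<in> ksubsets_meeting K (Suc t) L" using S by (simp add: ksubsets_meeting_def)
  then show ?thesis unfolding recover_def using False y by simp
qed

section \<open>Rows spanning the demand matrix\<close>

definition minor :: "'a::comm_ring_1 mat \<Rightarrow> nat list \<Rightarrow> nat list \<Rightarrow> 'a" where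
  "minor D rs cs = det (mat (length rs) (length rs) (\<lambda>(a,b). D $$ (rs ! a, cs ! b)))"

definition nonzero_minor :: "'a::comm_ring_1 mat \<Rightarrow> nat \<Rightarrow> nat \<Rightarrow> nat list \<Rightarrow> nat list \<Rightarrow> bool" where
  "nonzero_minor D K N rs cs \<longleftrightarrow> distinct rs \<and> distinct cs \<and> set rs \<subseteq> {..<K} \<and> set cs \<subseteq> {..<N}
     \<and> length cs = length rs \<and> minor D rs cs \<noteq> 0"

lemma nonzero_minor_rank:
  fixes D :: "'a::field mat"
  assumes D: "D \<in> carrier_mat K N" and nz: "nonzero_minor D K N rs cs"
  shows "length rs \<le> vec_space.rank K D"
proof -
  interpret vec_space "TYPE('a)" K .
  define m where "m = length rs"
  define A where "A = mat K m (\<lambda>(i,b). D $$ (i, cs ! b))"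
  define M where "M = mat m m (\<lambda>(a,b). D $$ (rs ! a, cs ! b))"
  have A: "A \<in> carrier_mat K m" and M: "M \<in> carrier_mat m m" unfolding A_def M_def by simp_all
  have dM: "det M \<noteq> 0" using nz unfolding nonzero_minor_def minor_def M_def m_def by simp
  have csN: "b < m \<Longrightarrow> cs ! b < N" for b
    using nz unfolding nonzero_minor_def m_def by (metis lessThan_iff nth_mem subsetD)
  have rsK: "a < m \<Longrightarrow> rs ! a < K" for a
    using nz unfolding nonzero_minor_def m_def by (metis lessThan_iff nth_mem subsetD)
  have colM: "b < m \<Longrightarrow> col M b = vec m (\<lambda>a. col A b $ (rs ! a))" for b
    by (rule eq_vecI) (simp_all add: A_def M_def rsK)
  have "set (cols A) \<subseteq> set (cols D)"
  proof
    fix x assume "x \<in> set (cols A)"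
    then obtain b where b: "b < m" "x = col A b" using A by (auto simp: cols_def)
    have "col A b = col D (cs ! b)" using D b csN by (auto simp: A_def col_def)
    then show "x \<in> set (cols D)" using b csN D by (auto simp: cols_def)
  qed
  moreover have dist: "distinct (cols A)"
  proof (rule ccontr)
    assume "\<not> distinct (cols A)"
    then obtain b b' where bb: "b < m" "b' < m" "b \<noteq> b'" "col A b = col A b'"
      using A by (auto simp: distinct_conv_nth)
    then have "col M b = col M b'" by (simp add: colM)
    then show False using det_identical_columns[OF M bb(3) bb(1) bb(2)] dM by simp
  qed
  moreover have "lin_indpt (set (cols A))"
  proof
    assume "lin_dep (set (cols A))"
    then obtain w where w: "w \<in> carrier_vec m" "w \<noteq> 0\<^sub>v m" "A *\<^sub>v w = 0\<^sub>v K"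
      using lin_depE[OF A _ dist] by blast
    have "M *\<^sub>v w = 0\<^sub>v m"
    proof (rule eq_vecI)
      fix a assume "a < dim_vec (0\<^sub>v m)"
      then have a: "a < m" by simp
      have "(M *\<^sub>v w) $ a = (A *\<^sub>v w) $ (rs ! a)"
        using a rsK[OF a] w(1) by (simp add: A_def M_def scalar_prod_def)
      then show "(M *\<^sub>v w) $ a = 0\<^sub>v m $ a" using a rsK[OF a] w(3) by simp
    qed (use M in simp)
    then show False using det_0_iff_vec_prod_zero_field[OF M] w dM by blast
  qed
  ultimately have "card (set (cols A)) \<le> rank D" by (intro rank_ge_card_indpt[OF D])
  then show ?thesis using distinct_card[OF dist] A unfolding m_def by simp
qed

definition border_cofactor :: "'a::comm_ring_1 mat \<Rightarrow> nat list \<Rightarrow> nat list \<Rightarrow> nat \<Rightarrow> nat \<Rightarrow> 'a" where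
  "border_cofactor D rs cs k a = (-1)^(a + length rs) *
     det (mat (length rs) (length rs) (\<lambda>(a',b). D $$ (del_row a ((!) (rs @ [k])) a', cs ! b)))"

lemma bordered_minor_eq_0:
  fixes D :: "'a::field mat"
  assumes nz: "nonzero_minor D K N rs cs"
    and max: "\<And>rs' cs'. nonzero_minor D K N rs' cs' \<Longrightarrow> length rs' \<le> length rs"
    and k: "k < K" "k \<notin> set rs" and c: "c < N"
  shows "D $$ (k,c) * minor D rs cs + (\<Sum>a<length rs. D $$ (rs ! a, c) * border_cofactor D rs cs k a) = 0"
proof -
  define m where "m = length rs"
  have lc: "length cs = m" using nz unfolding nonzero_minor_def m_def by simp
  define B where "B = mat (Suc m) (Suc m) (\<lambda>(a,b). D $$ ((rs @ [k]) ! a, (cs @ [c]) ! b))"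
  have B: "B \<in> carrier_mat (Suc m) (Suc m)" unfolding B_def by simp
  have dB: "det B = 0"
  proof (cases "c \<in> set cs")
    case True
    then obtain b where b: "b < m" "cs ! b = c" using lc by (auto simp: in_set_conv_nth)
    have "col B b = col B m"
      by (rule eq_vecI) (use b lc in \<open>auto simp: B_def col_def nth_append\<close>)
    then show ?thesis using det_identical_columns[OF B, of b m] b by simp
  next
    case False
    show ?thesis
    proof (rule ccontr)
      assume "det B \<noteq> 0"
      then have "nonzero_minor D K N (rs @ [k]) (cs @ [c])"
        using nz k c False lc unfolding nonzero_minor_def minor_def B_def m_def by auto
      then show False using max[of "rs @ [k]" "cs @ [c]"] unfolding m_def by simp
    qed
  qed
  have cof: "cofactor B a m = border_cofactor D rs cs k a" for a
  proof -
    have "mat_delete B a m = mat m m (\<lambda>(a',b). D $$ (del_row a ((!) (rs @ [k])) a', cs ! b))"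
      unfolding mat_delete_def B_def del_row_def by (rule eq_matI) (auto simp: nth_append lc)
    then show ?thesis unfolding cofactor_def border_cofactor_def m_def by simp
  qed
  have Bm: "a < Suc m \<Longrightarrow> B $$ (a,m) = (if a < m then D $$ (rs ! a, c) else D $$ (k,c))" for a
    using lc unfolding B_def m_def by (auto simp: nth_append)
  have "border_cofactor D rs cs k m = minor D rs cs"
  proof -
    have "mat m m (\<lambda>(a',b). D $$ (del_row m ((!) (rs @ [k])) a', cs ! b)) = mat m m (\<lambda>(a,b). D $$ (rs ! a, cs ! b))"
      by (rule eq_matI) (auto simp: del_row_def nth_append m_def)
    then show ?thesis unfolding border_cofactor_def minor_def m_def[symmetric] by (simp flip: mult_2)
  qed
  then have "det B = (\<Sum>a<m. D $$ (rs ! a, c) * border_cofactor D rs cs k a) + D $$ (k,c) * minor D rs cs"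
    using laplace_expansion_column[OF B, of m] by (simp add: Bm cof)
  then show ?thesis using dB unfolding m_def by (simp add: add.commute)
qed

lemma sum_set_nth:
  assumes "distinct xs"
  shows "(\<Sum>l\<in>set xs. f l) = (\<Sum>a<length xs. f (xs ! a))"
proof -
  have "inj_on (nth xs) {..<length xs}" using assms by (simp add: inj_on_nth)
  moreover have "nth xs ` {..<length xs} = set xs" by (auto simp: in_set_conv_nth)
  ultimately show ?thesis using sum.reindex by (metis comp_apply sum.cong)
qed

text \<open>A maximal nonzero minor selects rows spanning all others, with Cramer-rule coefficients.\<close>
lemma spanning_rows_exist:
  fixes D :: "'a::field mat"
  assumes D: "D \<in> carrier_mat K N"
  shows "\<exists>L \<alpha>. spanning_rows K N D L \<alpha> \<and> card L \<le> vec_space.rank K D"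
proof -
  have "nonzero_minor D K N [] []" unfolding nonzero_minor_def minor_def by simp
  moreover have "nonzero_minor D K N rs cs \<Longrightarrow> length rs < Suc K" for rs cs
    unfolding nonzero_minor_def by (metis card_lessThan card_mono distinct_card finite_lessThan less_Suc_eq_le)
  ultimately obtain rc where nz: "nonzero_minor D K N (fst rc) (snd rc)"
      and max: "\<forall>rc'. nonzero_minor D K N (fst rc') (snd rc') \<longrightarrow> length (fst rc') \<le> length (fst rc)"
    using ex_has_greatest_nat[of "\<lambda>rc. nonzero_minor D K N (fst rc) (snd rc)" "([],[])" "\<lambda>rc. length (fst rc)" "Suc K"]
    by auto
  define rs where "rs = fst rc"
  define cs where "cs = snd rc"
  have nz: "nonzero_minor D K N rs cs" using nz unfolding rs_def cs_def .
  have max: "nonzero_minor D K N rs' cs' \<Longrightarrow> length rs' \<le> length rs" for rs' cs'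
    using max[rule_format, of "(rs', cs')"] unfolding rs_def by simp
  define m where "m = length rs"
  define d where "d = minor D rs cs"
  define \<alpha> where "\<alpha> k l = - border_cofactor D rs cs k (the_inv_into {..<m} (nth rs) l) / d" for k l
  have d: "d \<noteq> 0" and dist: "distinct rs" and rsK: "set rs \<subseteq> {..<K}"
    using nz unfolding nonzero_minor_def d_def by simp_all
  have inv: "a < m \<Longrightarrow> the_inv_into {..<m} (nth rs) (rs ! a) = a" for a
    using dist unfolding m_def by (simp add: inj_on_nth the_inv_into_f_f)
  have "spanning_rows K N D (set rs) \<alpha>"
    unfolding spanning_rows_def
  proof (intro conjI allI impI rsK)
    fix k i assume k: "k < K" "k \<notin> set rs" and i: "i < N"
    have "(\<Sum>l\<in>set rs. \<alpha> k l * D $$ (l,i)) = (\<Sum>a<m. - (D $$ (rs ! a, i) * border_cofactor D rs cs k a) / d)"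
      unfolding sum_set_nth[OF dist] m_def[symmetric] by (intro sum.cong refl) (simp add: \<alpha>_def inv)
    also have "\<dots> = - (\<Sum>a<m. D $$ (rs ! a, i) * border_cofactor D rs cs k a) / d"
      by (simp add: sum_divide_distrib sum_negf)
    also have "\<dots> = D $$ (k,i)"
    proof -
      have "D $$ (k,i) * d + (\<Sum>a<m. D $$ (rs ! a, i) * border_cofactor D rs cs k a) = 0"
        unfolding d_def m_def by (rule bordered_minor_eq_0[OF nz _ k i]) (rule max)
      then show ?thesis using d by (simp add: add_eq_0_iff)
    qed
    finally show "D $$ (k,i) = (\<Sum>l\<in>set rs. \<alpha> k l * D $$ (l,i))" ..
  qed
  moreover have "card (set rs) \<le> vec_space.rank K D"
    using nonzero_minor_rank[OF D nz] distinct_card[OF dist] by simp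
  ultimately show ?thesis by blast
qed

lemma spanning_rows_choice:
  "\<exists>L \<alpha>. \<forall>D \<in> carrier_mat K N. spanning_rows K N D (L D) (\<alpha> D) \<and> card (L D) \<le> rank_q (D :: 'a::field mat)"
proof -
  have "\<forall>D \<in> carrier_mat K N. \<exists>L\<alpha>. spanning_rows K N D (fst L\<alpha>) (snd L\<alpha>) \<and> card (fst L\<alpha>) \<le> rank_q (D :: 'a mat)"
  proof
    fix D :: "'a mat" assume D: "D \<in> carrier_mat K N"
    obtain L \<alpha> where "spanning_rows K N D L \<alpha>" "card L \<le> vec_space.rank K D"
      using spanning_rows_exist[OF D] by blast
    then show "\<exists>L\<alpha>. spanning_rows K N D (fst L\<alpha>) (snd L\<alpha>) \<and> card (fst L\<alpha>) \<le> rank_q D"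
      using D by (intro exI[of _ "(L, \<alpha>)"]) simp
  qed
  from bchoice[OF this] obtain L\<alpha> :: "'a mat \<Rightarrow> nat set \<times> (nat \<Rightarrow> nat \<Rightarrow> 'a)" where
    L\<alpha>: "\<forall>D \<in> carrier_mat K N. spanning_rows K N D (fst (L\<alpha> D)) (snd (L\<alpha> D)) \<and> card (fst (L\<alpha> D)) \<le> rank_q D"
    by blast
  show ?thesis by (intro exI[of _ "\<lambda>D. fst (L\<alpha> D)"] exI[of _ "\<lambda>D. snd (L\<alpha> D)"]) (use L\<alpha> in blast)
qed

lemma rank_q_le_min:
  fixes D :: "'a::field mat"
  assumes D: "D \<in> carrier_mat K N"
  shows "rank_q D \<le> min K N"
proof -
  interpret vec_space "TYPE('a)" K .
  have "subspace class_ring (span (set (cols D))) V"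
    using D by (metis cols_dim carrier_matD(1) span_is_subspace)
  then have "vectorspace.dim class_ring (vs (span (set (cols D)))) \<le> dim"
    by (rule subspace_dim[OF _ fin_dim fin_dim_span_cols[OF D]])
  then have "rank D \<le> K" unfolding rank_def dim_is_n .
  then show ?thesis using rank_le_nc[OF D] D by simp
qed

lemma exists_full_rank: "\<exists>D :: 'a::field mat. D \<in> carrier_mat K N \<and> rank_q D = min K N"
proof -
  define D :: "'a mat" where "D = mat K N (\<lambda>(i,j). if i = j then 1 else 0)"
  have D: "D \<in> carrier_mat K N" unfolding D_def by simp
  define xs where "xs = [0..<min K N]"
  have "mat (min K N) (min K N) (\<lambda>(a,b). D $$ (xs ! a, xs ! b)) = 1\<^sub>m (min K N)"
    by (rule eq_matI) (auto simp: D_def xs_def)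
  then have "nonzero_minor D K N xs xs" unfolding nonzero_minor_def minor_def xs_def by auto
  then have "min K N \<le> rank_q D" using nonzero_minor_rank[OF D] D unfolding xs_def by fastforce
  with rank_q_le_min[OF D] have "rank_q D = min K N" by (rule antisym)
  with D show ?thesis by blast
qed

section \<open>The delivery scheme\<close>

definition subfile :: "nat \<Rightarrow> nat \<Rightarrow> nat \<Rightarrow> nat \<Rightarrow> nat set" where
  "subfile K t B' j = fin_enum (ksubsets K t) (j div B')"

definition symbol :: "nat \<Rightarrow> nat \<Rightarrow> nat \<Rightarrow> nat set \<Rightarrow> nat \<Rightarrow> nat" where
  "symbol K t B' T p = fin_index (ksubsets K t) T * B' + p"

lemma symbol_less: "T \<in> ksubsets K t \<Longrightarrow> p < B' \<Longrightarrow> symbol K t B' T p < (K choose t) * B'"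
  unfolding symbol_def using fin_index_less[of "ksubsets K t" T] by (simp add: block_less)

lemma subfile_symbol: "T \<in> ksubsets K t \<Longrightarrow> p < B' \<Longrightarrow> subfile K t B' (symbol K t B' T p) = T"
  unfolding subfile_def symbol_def by (simp add: fin_enum_index)

lemma symbol_mod: "p < B' \<Longrightarrow> symbol K t B' T p mod B' = p"
  unfolding symbol_def by simp

lemma subfile_in_ksubsets: "j < (K choose t) * B' \<Longrightarrow> subfile K t B' j \<in> ksubsets K t"
  unfolding subfile_def by (rule fin_enum_in) (simp_all add: less_mult_imp_div_less)

lemma symbol_subfile: "j < (K choose t) * B' \<Longrightarrow> symbol K t B' (subfile K t B' j) (j mod B') = j"
  unfolding symbol_def subfile_def by (simp add: fin_index_enum less_mult_imp_div_less)

definition placement :: "nat \<Rightarrow> nat \<Rightarrow> nat \<Rightarrow> nat \<Rightarrow> nat \<Rightarrow> (nat \<times> nat) set" where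
  "placement K N t B' k = {(i,j). i < N \<and> j < (K choose t) * B' \<and> k \<in> subfile K t B' j}"

lemma uncoded_cache_placement:
  assumes "T \<in> ksubsets K t" and "k \<in> T" and "p < B'" and "i < N"
  shows "uncoded_cache (placement K N t B' k) F (i, symbol K t B' T p) = F i (symbol K t B' T p)"
  using assms by (simp add: uncoded_cache_def placement_def symbol_less subfile_symbol)

lemma placement_subset: "placement K N t B' k \<subseteq> {..<N} \<times> {..<(K choose t) * B'}"
  unfolding placement_def by auto

lemma card_placement:
  assumes "k < K"
  shows "real (card (placement K N t B' k)) = real N * real t / real K * real ((K choose t) * B')"
proof -
  define J where "J = {j. j < (K choose t) * B' \<and> k \<in> subfile K t B' j}"
  have "bij_betw (\<lambda>(T,p). symbol K t B' T p) ({T\<in>ksubsets K t. k \<in> T} \<times> {..<B'}) J"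
  proof (rule bij_betw_byWitness[where f' = "\<lambda>j. (subfile K t B' j, j mod B')"])
    show "(\<lambda>(T,p). symbol K t B' T p) ` ({T\<in>ksubsets K t. k \<in> T} \<times> {..<B'}) \<subseteq> J"
      by (auto simp: J_def symbol_less subfile_symbol)
    have "j \<in> J \<Longrightarrow> 0 < B'" for j by (auto simp: J_def intro: gr0I)
    then show "(\<lambda>j. (subfile K t B' j, j mod B')) ` J \<subseteq> {T\<in>ksubsets K t. k \<in> T} \<times> {..<B'}"
      by (auto simp: J_def subfile_in_ksubsets)
  qed (auto simp: J_def subfile_symbol symbol_mod symbol_subfile)
  then have "card J = card {T\<in>ksubsets K t. k \<in> T} * B'"
    by (simp add: bij_betw_same_card[symmetric] card_cartesian_product)
  moreover have "placement K N t B' k = {..<N} \<times> J"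
    unfolding placement_def J_def by auto
  ultimately have "card (placement K N t B' k) * K = N * t * ((K choose t) * B')"
    using card_ksubsets_containing[OF assms, of t] by (simp add: card_cartesian_product mult_ac)
  then have "real (card (placement K N t B' k)) * real K = real N * real t * real ((K choose t) * B')"
    by (metis of_nat_mult)
  then show ?thesis using assms by (simp add: field_simps)
qed

definition encode :: "nat \<Rightarrow> nat \<Rightarrow> nat \<Rightarrow> nat \<Rightarrow> nat set \<Rightarrow> 'a::comm_ring_1 mat \<Rightarrow> (nat \<Rightarrow> nat \<Rightarrow> 'a) \<Rightarrow> nat \<Rightarrow> 'a" where
  "encode K N t B' L D F l =
     (if l < card (ksubsets_meeting K (Suc t) L) * B'
      then coded_msg D N (\<lambda>i T. F i (symbol K t B' T (l mod B'))) (fin_enum (ksubsets_meeting K (Suc t) L) (l div B'))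
      else 0)"

lemma transmit_encode:
  assumes R: "card (ksubsets_meeting K (Suc t) L) * B' \<le> R"
    and S: "S \<in> ksubsets_meeting K (Suc t) L" and p: "p < B'"
  shows "transmit R (encode K N t B' L D (trunc_files N ((K choose t) * B') F))
           (fin_index (ksubsets_meeting K (Suc t) L) S * B' + p)
       = coded_msg D N (\<lambda>i T. F i (symbol K t B' T p)) S"
proof -
  define A where "A = ksubsets_meeting K (Suc t) L"
  have pos: "fin_index A S * B' + p < card A * B'"
    using fin_index_less[of A S] S p by (simp add: A_def block_less)
  have SK: "S \<in> ksubsets K (Suc t)" using S by (simp add: ksubsets_meeting_def)
  have "coded_msg D N (\<lambda>i T. trunc_files N ((K choose t) * B') F i (symbol K t B' T p)) S
      = coded_msg D N (\<lambda>i T. F i (symbol K t B' T p)) S"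
    by (rule coded_msg_cong)
       (simp add: trunc_files_def symbol_less[OF ksubsets_Diff_singleton[OF SK] p])
  then show ?thesis
    using pos R S p unfolding transmit_def encode_def A_def[symmetric]
    by (simp add: fin_enum_index A_def)
qed

text \<open>A user k outside the subfile index T recovers the message for T \<union> {k} and strips off the
  terms of the other members, whose subfiles it has cached.\<close>
definition decode :: "nat \<Rightarrow> nat \<Rightarrow> nat \<Rightarrow> nat \<Rightarrow> nat set \<Rightarrow> (nat \<Rightarrow> nat \<Rightarrow> 'a::comm_ring_1) \<Rightarrow> 'a mat
    \<Rightarrow> nat \<Rightarrow> (nat \<times> nat \<Rightarrow> 'a) \<Rightarrow> (nat \<Rightarrow> 'a) \<Rightarrow> nat \<Rightarrow> 'a" where
  "decode K N t B' L \<alpha> D k c x j =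
     (let T = subfile K t B' j; p = j mod B'; S = insert k T in
      if k \<in> T then (\<Sum>i<N. D $$ (k,i) * c (i,j))
      else pos_sign k S *
        (recover K t L \<alpha> (\<lambda>S'. x (fin_index (ksubsets_meeting K (Suc t) L) S' * B' + p)) S
         - (\<Sum>k'\<in>S - {k}. pos_sign k' S * (\<Sum>i<N. D $$ (k',i) * c (i, symbol K t B' (S - {k'}) p)))))"

lemma decode_correct:
  fixes D :: "'a::field mat"
  assumes rows: "spanning_rows K N D L \<alpha>" and k: "k < K" and j: "j < (K choose t) * B'"
    and x: "\<And>S p. S \<in> ksubsets_meeting K (Suc t) L \<Longrightarrow> p < B' \<Longrightarrow>
       x (fin_index (ksubsets_meeting K (Suc t) L) S * B' + p) = coded_msg D N (\<lambda>i T. F i (symbol K t B' T p)) S"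
  shows "decode K N t B' L \<alpha> D k (uncoded_cache (placement K N t B' k) F) x j = demanded N D k F j"
proof -
  define T where "T = subfile K t B' j"
  define p where "p = j mod B'"
  define G where "G i T' = F i (symbol K t B' T' p)" for i T'
  define c where "c = uncoded_cache (placement K N t B' k) F"
  have p: "p < B'" using j unfolding p_def by (cases "B' = 0") simp_all
  have T: "T \<in> ksubsets K t" using subfile_in_ksubsets[OF j] unfolding T_def .
  have jT: "symbol K t B' T p = j" using symbol_subfile[OF j] unfolding T_def p_def .
  have cache: "T' \<in> ksubsets K t \<Longrightarrow> k \<in> T' \<Longrightarrow> i < N \<Longrightarrow> c (i, symbol K t B' T' p) = G i T'" for T' i
    unfolding c_def G_def by (simp add: uncoded_cache_placement p)
  have demand: "demanded N D k F j = (\<Sum>i<N. D $$ (k,i) * G i T)"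
    unfolding demanded_def G_def jT ..
  show ?thesis
  proof (cases "k \<in> T")
    case True
    then show ?thesis
      unfolding demand decode_def c_def[symmetric] T_def[symmetric] Let_def
      using cache[OF T True] by (simp flip: jT)
  next
    case False
    define S where "S = insert k T"
    have S: "S \<in> ksubsets K (Suc t)" unfolding S_def using ksubsets_insert[OF T k False] .
    have kS: "k \<in> S" and ST: "S - {k} = T" unfolding S_def using False by auto
    have "recover K t L \<alpha> (\<lambda>S'. x (fin_index (ksubsets_meeting K (Suc t) L) S' * B' + p)) S = coded_msg D N G S"
      by (rule recover_coded_msg[OF rows S]) (simp add: x p G_def[abs_def])
    also have "\<dots> = pos_sign k S * (\<Sum>i<N. D $$ (k,i) * G i T)
        + (\<Sum>k'\<in>S - {k}. pos_sign k' S * (\<Sum>i<N. D $$ (k',i) * G i (S - {k'})))"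
      unfolding coded_msg_def by (subst sum.remove[OF ksubsets_finite[OF S] kS]) (simp add: ST)
    also have "(\<Sum>k'\<in>S - {k}. pos_sign k' S * (\<Sum>i<N. D $$ (k',i) * G i (S - {k'})))
        = (\<Sum>k'\<in>S - {k}. pos_sign k' S * (\<Sum>i<N. D $$ (k',i) * c (i, symbol K t B' (S - {k'}) p)))"
    proof (intro sum.cong refl arg_cong2[where f = "(*)"])
      fix k' i assume k': "k' \<in> S - {k}" and "i \<in> {..<N}"
      moreover have "S - {k'} \<in> ksubsets K t" using k' ksubsets_Diff_singleton[OF S] by simp
      moreover have "k \<in> S - {k'}" using k' kS by simp
      ultimately show "G i (S - {k'}) = c (i, symbol K t B' (S - {k'}) p)" by (simp add: cache)
    qed
    finally show ?thesis
      unfolding demand decode_def c_def[symmetric] T_def[symmetric] p_def[symmetric] S_def[symmetric] Let_def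
      using False by (simp add: mult.assoc[symmetric] pos_sign_square)
  qed
qed

lemma delivery_correct:
  fixes D :: "'a::field mat"
  assumes "spanning_rows K N D L \<alpha>" and R: "card (ksubsets_meeting K (Suc t) L) * B' \<le> R"
    and "k < K" and "j < (K choose t) * B'"
  shows "decode K N t B' L \<alpha> D k (uncoded_cache (placement K N t B' k) F)
           (transmit R (encode K N t B' L D (trunc_files N ((K choose t) * B') F))) j
       = demanded N D k F j"
  using assms(1,3,4) by (rule decode_correct) (simp add: transmit_encode[OF R])

section \<open>The load\<close>

definition load :: "nat \<Rightarrow> nat \<Rightarrow> nat \<Rightarrow> nat \<Rightarrow> nat" where
  "load K t B' r = B' * ((K choose (t + 1)) - ((K - r) choose (t + 1)))"

lemma card_messages_le_load:
  assumes "L \<subseteq> {..<K}" and "card L \<le> r"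
  shows "card (ksubsets_meeting K (Suc t) L) * B' \<le> load K t B' r"
  unfolding load_def card_ksubsets_meeting[OF assms(1)] Suc_eq_plus1 using assms(2)
  by (subst mult.commute) (intro mult_le_mono2 diff_le_mono2 binomial_right_mono)

lemma load_div:
  assumes "0 < B'"
  shows "real (load K t B' r) / real ((K choose t) * B')
       = (real (K choose (t + 1)) - real ((K - r) choose (t + 1))) / real (K choose t)"
  using assms binomial_right_mono[of "K - r" K "t + 1"] unfolding load_def by simp

lemma normalized_load_mono:
  assumes "r \<le> r'"
  shows "(real (K choose (t + 1)) - real ((K - r) choose (t + 1))) / real (K choose t)
       \<le> (real (K choose (t + 1)) - real ((K - r') choose (t + 1))) / real (K choose t)"
proof -
  have "(K - r') choose (t + 1) \<le> (K - r) choose (t + 1)"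
    using assms by (intro binomial_right_mono diff_le_mono2)
  then show ?thesis by (intro divide_right_mono) simp_all
qed

theorem theorem1:
  fixes K N t B :: nat
  assumes "0 < K" and "0 < N" and "t \<le> K"
    and "0 < B" and "(K choose t) dvd B"
  shows "\<exists>(Z :: nat \<Rightarrow> (nat \<times> nat) set)
           (L :: 'a::{finite,field} mat \<Rightarrow> nat)
           (enc :: 'a mat \<Rightarrow> (nat \<Rightarrow> nat \<Rightarrow> 'a) \<Rightarrow> nat \<Rightarrow> 'a)
           (dec :: 'a mat \<Rightarrow> nat \<Rightarrow> (nat \<times> nat \<Rightarrow> 'a) \<Rightarrow> (nat \<Rightarrow> 'a) \<Rightarrow> nat \<Rightarrow> 'a).
     (\<forall>k<K. Z k \<subseteq> {..<N} \<times> {..<B} \<and>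
            real (card (Z k)) = (real N * real t / real K) * real B)
   \<and> (\<forall>D \<in> carrier_mat K N.
        real (L D) / real B
          = (real (K choose (t + 1)) - real ((K - rank_q D) choose (t + 1)))
            / real (K choose t)
      \<and> (\<forall>F. \<forall>k<K. \<forall>j<B.
            dec D k (uncoded_cache (Z k) F) (transmit (L D) (enc D (trunc_files N B F))) j
              = demanded N D k F j))
   \<and> (\<forall>D \<in> carrier_mat K N.
        real (L D) / real B
          \<le> (real (K choose (t + 1)) - real ((K - min K N) choose (t + 1))) / real (K choose t))
   \<and> (\<forall>D \<in> carrier_mat K N. rank_q D = min K N \<longrightarrow>
        real (L D) / real B
          = (real (K choose (t + 1)) - real ((K - min K N) choose (t + 1))) / real (K choose t))
   \<and> (\<exists>D :: 'a mat. D \<in> carrier_mat K N \<and> rank_q D = min K N)"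
proof -
  define B' where "B' = B div (K choose t)"
  have B: "B = (K choose t) * B'" and "0 < B'"
    using assms(4,5) unfolding B'_def by auto
  obtain L \<alpha> where lead: "\<forall>D \<in> carrier_mat K N.
      spanning_rows K N D (L D) (\<alpha> D) \<and> card (L D) \<le> rank_q (D :: 'a mat)"
    using spanning_rows_choice[of K N] by blast
  define R where "R D = load K t B' (rank_q D)" for D :: "'a mat"
  have ratio: "real (R D) / real B
      = (real (K choose (t + 1)) - real ((K - rank_q D) choose (t + 1))) / real (K choose t)" for D
    unfolding R_def B using load_div[OF \<open>0 < B'\<close>] .
  show ?thesis
  proof (intro exI[of _ "placement K N t B'"] exI[of _ R] exI[of _ "\<lambda>D. encode K N t B' (L D) D"]
      exI[of _ "\<lambda>D. decode K N t B' (L D) (\<alpha> D) D"] conjI allI impI ballI)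
    fix k assume "k < K"
    show "placement K N t B' k \<subseteq> {..<N} \<times> {..<B}" unfolding B by (rule placement_subset)
    show "real (card (placement K N t B' k)) = real N * real t / real K * real B"
      unfolding B by (rule card_placement[OF \<open>k < K\<close>])
  next
    fix D :: "'a mat" and F k j assume "D \<in> carrier_mat K N" and "k < K" and "j < B"
    with lead have "spanning_rows K N D (L D) (\<alpha> D)" and "card (L D) \<le> rank_q D" by auto
    then show "decode K N t B' (L D) (\<alpha> D) D k (uncoded_cache (placement K N t B' k) F)
        (transmit (R D) (encode K N t B' (L D) D (trunc_files N B F))) j = demanded N D k F j"
      using \<open>k < K\<close> \<open>j < B\<close> unfolding B R_def
      by (intro delivery_correct card_messages_le_load) (simp_all add: spanning_rows_def)
  next
    fix D :: "'a mat" assume "D \<in> carrier_mat K N"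
    then show "real (R D) / real B
        \<le> (real (K choose (t + 1)) - real ((K - min K N) choose (t + 1))) / real (K choose t)"
      unfolding ratio by (intro normalized_load_mono rank_q_le_min)
  qed (simp_all add: ratio exists_full_rank)
qed

end
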